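(* Let $T_1,T_2>0$, $0<\tau<2\min(T_1,T_2)$, $\gamma>0$, and let $R_1=\tau/\sqrt2$, $R_2=R_1+\tau$, $c_0=(T_1+\tau/2+R_1,\,T_2+\tau/2+R_1)$. Define the regions of $\mathbb{R}^2$ (for $p=(p_1,p_2)$): $S_{1,\alpha}=\{T_1+\tfrac\tau2<p_1<T_1+\tfrac\tau2+R_1,\ T_2+\tfrac\tau2<p_2<T_2+\tfrac\tau2+R_1,\ \|p-c_0\|<R_1\}$, $S_{1,1}=\{T_1+\tfrac\tau2<p_1<T_1+\tfrac\tau2+R_1,\ p_2>T_2+\tfrac\tau2+R_1\}$, $S_{1,2}=\{T_2+\tfrac\tau2<p_2<T_2+\tfrac\tau2+R_1,\ p_1>T_1+\tfrac\tau2+R_1\}$, $S_{1,3}=\{p_1>T_1+\tfrac\tau2+R_1,\ p_2>T_2+\tfrac\tau2+R_1\}$, $S_{0,\alpha}=\{p_1\le T_1+\tfrac\tau2+R_1,\ p_2\le T_2+\tfrac\tau2+R_1,\ \|p-c_0\|>R_2\}$, $S_{0,1}=\{p_1\le T_1-\tfrac\tau2,\ p_2>T_2+\tfrac\tau2+R_1\}$, $S_{0,2}=\{p_2\le T_2-\tfrac\tau2,\ p_1>T_1+\tfrac\tau2+R_1\}$, $S_{\tau,\alpha}=\{p_1\le T_1+\tfrac\tau2+R_1,\ p_2\le T_2+\tfrac\tau2+R_1,\ R_1\le\|p-c_0\|\le R_2\}$, $S_{\tau,1}=\{T_1-\tfrac\tau2\le p_1\le T_1+\tfrac\tau2,\ p_2>T_2+\tfrac\tau2+R_1\}$,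 $S_{\tau,2}=\{T_2-\tfrac\tau2\le p_2\le T_2+\tfrac\tau2,\ p_1>T_1+\tfrac\tau2+R_1\}$, and $f_\tau=1$ on $S_{1,\alpha}\cup S_{1,1}\cup S_{1,2}\cup S_{1,3}$, $f_\tau=0$ on $S_{0,\alpha}\cup S_{0,1}\cup S_{0,2}$, $f_\tau(p)=\frac{R_2-\|p-c_0\|}{\tau}$ on $S_{\tau,\alpha}$, $f_\tau(p)=\frac{p_1-(T_1-\tau/2)}{\tau}$ on $S_{\tau,1}$, $f_\tau(p)=\frac{p_2-(T_2-\tau/2)}{\tau}$ on $S_{\tau,2}$. Let $g_E(x,x')=e^{\gamma\|x-x'\|}$ and let $B^*(z)=\sup_{w}\frac{\mathrm{L}_{f_\tau,\infty}(w)}{g_E(z,w)}$ be the $g_E$-smooth sensitivity of $f_\tau$. Then for $z=(z_1,z_2)$: $B^*(z)=\max\left(\frac{1}{T_1+\tau/2-z_1},\frac1\tau e^{-\gamma(T_1-\tau/2-z_1)}\right)$ for $z\in S_{0,1}$; $B^*(z)=\max\left(\frac{1}{T_2+\tau/2-z_2},\frac1\tau e^{-\gamma(T_2-\tau/2-z_2)}\right)$ for $z\in S_{0,2}$; $B^*(z)=\max\left(\frac{1}{\|z-c_0\|-R_1},\frac1\tau e^{-\gamma(\|z-c_0\|-R_2)}\right)$ for $z\in S_{0,\alpha}$; $B^*(z)=\max\left(\frac{1}{z_1-(T_1-\tau/2)},\frac1\tau e^{-\gamma(z_1-(T_1+\tau/2))}\right)$ for $z\in S_{1,1}$; $B^*(z)=\max\left(\frac{1}{z_2-(T_2-\tau/2)},\frac1\tau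 e^{-\gamma(z_2-(T_2+\tau/2))}\right)$ for $z\in S_{1,2}$; $B^*(z)=\max\left(\frac{1}{z_1-(T_1-\tau/2)},\frac1\tau e^{-\gamma(z_1-(T_1+\tau/2))},\frac{1}{z_2-(T_2-\tau/2)},\frac1\tau e^{-\gamma(z_2-(T_2+\tau/2))}\right)$ for $z\in S_{1,3}$; $B^*(z)=\max\left(\frac{1}{R_2-\|z-c_0\|},\frac1\tau e^{-\gamma(R_1-\|z-c_0\|)}\right)$ for $z\in S_{1,\alpha}$; $B^*(z)=\frac1\tau$ for $z\in S_{\tau,1}\cup S_{\tau,2}\cup S_{\tau,\alpha}$.
   Context: $\|\cdot\|$ is the Euclidean norm. $\mathrm{L}_{f,\infty}(w)$ is the infimum of all $K$ such that $|f(w)-f(w')|\le K\|w-w'\|$ for all $w'$ in the domain of $f$; the supremum defining $B^*$ ranges over the domain of $f_\tau$ (the union of the regions above). *)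

theory Defs
  imports "HOL-Analysis.Analysis"
begin

text \<open>Points of the plane are pairs of reals; the norm on real \<times> real is the Euclidean norm.\<close>

definition R1 :: "real \<Rightarrow> real" where "R1 \<tau> = \<tau> / sqrt 2"
definition R2 :: "real \<Rightarrow> real" where "R2 \<tau> = R1 \<tau> + \<tau>"
definition c0 :: "real \<Rightarrow> real \<Rightarrow> real \<Rightarrow> real \<times> real" where
  "c0 T1 T2 \<tau> = (T1 + \<tau>/2 + R1 \<tau>, T2 + \<tau>/2 + R1 \<tau>)"

definition S1a :: "real \<Rightarrow> real \<Rightarrow> real \<Rightarrow> (real \<times> real) set" where
  "S1a T1 T2 \<tau> = {p. T1 + \<tau>/2 < fst p \<and> fst p < T1 + \<tau>/2 + R1 \<tau> \<and>
                     T2 + \<tau>/2 < snd p \<and> snd p < T2 + \<tau>/2 + R1 \<tau> \<and>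
                     norm (p - c0 T1 T2 \<tau>) < R1 \<tau>}"
definition S11 :: "real \<Rightarrow> real \<Rightarrow> real \<Rightarrow> (real \<times> real) set" where
  "S11 T1 T2 \<tau> = {p. T1 + \<tau>/2 < fst p \<and> fst p < T1 + \<tau>/2 + R1 \<tau> \<and> snd p > T2 + \<tau>/2 + R1 \<tau>}"
definition S12 :: "real \<Rightarrow> real \<Rightarrow> real \<Rightarrow> (real \<times> real) set" where
  "S12 T1 T2 \<tau> = {p. T2 + \<tau>/2 < snd p \<and> snd p < T2 + \<tau>/2 + R1 \<tau> \<and> fst p > T1 + \<tau>/2 + R1 \<tau>}"
definition S13 :: "real \<Rightarrow> real \<Rightarrow> real \<Rightarrow> (real \<times> real) set" where
  "S13 T1 T2 \<tau> = {p. fst p > T1 + \<tau>/2 + R1 \<tau> \<and> snd p > T2 + \<tau>/2 + R1 \<tau>}"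
definition S0a :: "real \<Rightarrow> real \<Rightarrow> real \<Rightarrow> (real \<times> real) set" where
  "S0a T1 T2 \<tau> = {p. fst p \<le> T1 + \<tau>/2 + R1 \<tau> \<and> snd p \<le> T2 + \<tau>/2 + R1 \<tau> \<and>
                     norm (p - c0 T1 T2 \<tau>) > R2 \<tau>}"
definition S01 :: "real \<Rightarrow> real \<Rightarrow> real \<Rightarrow> (real \<times> real) set" where
  "S01 T1 T2 \<tau> = {p. fst p \<le> T1 - \<tau>/2 \<and> snd p > T2 + \<tau>/2 + R1 \<tau>}"
definition S02 :: "real \<Rightarrow> real \<Rightarrow> real \<Rightarrow> (real \<times> real) set" where
  "S02 T1 T2 \<tau> = {p. snd p \<le> T2 - \<tau>/2 \<and> fst p > T1 + \<tau>/2 + R1 \<tau>}"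
definition Sta :: "real \<Rightarrow> real \<Rightarrow> real \<Rightarrow> (real \<times> real) set" where
  "Sta T1 T2 \<tau> = {p. fst p \<le> T1 + \<tau>/2 + R1 \<tau> \<and> snd p \<le> T2 + \<tau>/2 + R1 \<tau> \<and>
                     R1 \<tau> \<le> norm (p - c0 T1 T2 \<tau>) \<and> norm (p - c0 T1 T2 \<tau>) \<le> R2 \<tau>}"
definition St1 :: "real \<Rightarrow> real \<Rightarrow> real \<Rightarrow> (real \<times> real) set" where
  "St1 T1 T2 \<tau> = {p. T1 - \<tau>/2 \<le> fst p \<and> fst p \<le> T1 + \<tau>/2 \<and> snd p > T2 + \<tau>/2 + R1 \<tau>}"
definition St2 :: "real \<Rightarrow> real \<Rightarrow> real \<Rightarrow> (real \<times> real) set" where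
  "St2 T1 T2 \<tau> = {p. T2 - \<tau>/2 \<le> snd p \<and> snd p \<le> T2 + \<tau>/2 \<and> fst p > T1 + \<tau>/2 + R1 \<tau>}"

definition dom_f :: "real \<Rightarrow> real \<Rightarrow> real \<Rightarrow> (real \<times> real) set" where
  "dom_f T1 T2 \<tau> = S1a T1 T2 \<tau> \<union> S11 T1 T2 \<tau> \<union> S12 T1 T2 \<tau> \<union> S13 T1 T2 \<tau>
     \<union> S0a T1 T2 \<tau> \<union> S01 T1 T2 \<tau> \<union> S02 T1 T2 \<tau>
     \<union> Sta T1 T2 \<tau> \<union> St1 T1 T2 \<tau> \<union> St2 T1 T2 \<tau>"

text \<open>f_tau (values outside its domain are irrelevant and set to 0).\<close>
definition f_tau :: "real \<Rightarrow> real \<Rightarrow> real \<Rightarrow> real \<times> real \<Rightarrow> real" where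
  "f_tau T1 T2 \<tau> p =
    (if p \<in> S1a T1 T2 \<tau> \<union> S11 T1 T2 \<tau> \<union> S12 T1 T2 \<tau> \<union> S13 T1 T2 \<tau> then 1
     else if p \<in> S0a T1 T2 \<tau> \<union> S01 T1 T2 \<tau> \<union> S02 T1 T2 \<tau> then 0
     else if p \<in> Sta T1 T2 \<tau> then (R2 \<tau> - norm (p - c0 T1 T2 \<tau>)) / \<tau>
     else if p \<in> St1 T1 T2 \<tau> then (fst p - (T1 - \<tau>/2)) / \<tau>
     else if p \<in> St2 T1 T2 \<tau> then (snd p - (T2 - \<tau>/2)) / \<tau>
     else 0)"

text \<open>Local Lipschitz constant of f at w relative to domain D, as an extended real
  (infimum over the empty set is +\<infinity>).\<close>
definition local_lip :: "('a::real_normed_vector \<Rightarrow> real) \<Rightarrow> 'a set \<Rightarrow> 'a \<Rightarrow> ereal" where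
  "local_lip f D w = Inf {ereal K | K. \<forall>w'\<in>D. \<bar>f w - f w'\<bar> \<le> K * norm (w - w')}"

definition g_E :: "real \<Rightarrow> 'a::real_normed_vector \<Rightarrow> 'a \<Rightarrow> real" where
  "g_E \<gamma> x x' = exp (\<gamma> * norm (x - x'))"

definition smooth_sens :: "('a::real_normed_vector \<Rightarrow> real) \<Rightarrow> 'a set \<Rightarrow> ('a \<Rightarrow> 'a \<Rightarrow> real) \<Rightarrow> 'a \<Rightarrow> ereal" where
  "smooth_sens f D g z = (SUP w\<in>D. local_lip f D w / ereal (g z w))"

end

theory Submission
  imports Defs
begin

(* Write \<sigma> for the signed Euclidean distance to the quadrant {p. c0 \<le> p} (negative inside it).
   Then f_tau = h \<circ> \<sigma> with the ramp h(s) = clamp ((R2 - s) / \<tau>): the S1 regions are where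
   \<sigma> < R1, the St regions where R1 \<le> \<sigma> \<le> R2, the S0 regions where \<sigma> > R2.  Since \<sigma> is
   1-Lipschitz and from every point p each level R1 \<le> s \<le> R2 is reached (horizontally,
   vertically or radially from c0) at distance exactly |\<sigma> p - s|, every question about f_tau
   becomes one about h on the line: the local Lipschitz constant at w is the largest difference
   quotient of h at \<sigma> w (1/\<tau> on the ramp, 1/distance to its far end off it), and B*(z) is
   the supremum over s of that slope at s times exp (-\<gamma> |\<sigma> z - s|).  By convexity of x \<mapsto> exp (\<gamma> x) / x this supremum is attained
   either at s = \<sigma> z or at the point of the ramp nearest to \<sigma> z, which gives the two terms
   of each max. *)

section \<open>A ramp on the real line\<close>

definition ramp :: "real \<Rightarrow> real \<Rightarrow> real \<Rightarrow> real" where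
  "ramp r t s = max 0 (min 1 ((r + t - s) / t))"

definition ramp_slope :: "real \<Rightarrow> real \<Rightarrow> real \<Rightarrow> real" where
  "ramp_slope r t s = (if s < r then 1 / (r + t - s) else if s \<le> r + t then 1 / t else 1 / (s - r))"

definition ramp_smooth_sens :: "real \<Rightarrow> real \<Rightarrow> real \<Rightarrow> real \<Rightarrow> real" where
  "ramp_smooth_sens r t g v =
    (if v < r then max (1 / (r + t - v)) (exp (- g * (r - v)) / t)
     else if v \<le> r + t then 1 / t
     else max (1 / (v - r)) (exp (- g * (v - (r + t))) / t))"

lemma exp_decay_div_le_max:
  fixes a u b c :: real
  assumes "0 < a" "a \<le> u" "u \<le> b"
  shows "exp (- c * (b - u)) / u \<le> max (exp (- c * (b - a)) / a) (1 / b)"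
proof (cases "a = b")
  case True then show ?thesis using assms by simp
next
  case False
  define l where "l = (b - u) / (b - a)"
  have l: "0 \<le> l" "l \<le> 1" and lb: "l * (b - a) = b - u"
    using assms False by (auto simp: l_def field_simps)
  then have u: "u = l * a + (1 - l) * b" by (simp add: algebra_simps)
  define M where "M = max (exp (- c * (b - a)) / a) (1 / b)"
  have "exp (- c * (b - a)) / a \<le> M" "1 / b \<le> M" by (simp_all add: M_def)
  then have Ma: "exp (- c * (b - a)) \<le> M * a" and Mb: "1 \<le> M * b"
    using assms by (simp_all add: pos_divide_le_eq)
  have "exp (- c * (b - u)) = exp (l * (- c * (b - a)) + (1 - l) * 0)"
    by (simp add: u algebra_simps)
  also have "\<dots> \<le> l * exp (- c * (b - a)) + (1 - l) * exp 0"
    using convex_onD[OF exp_convex, of l 0 "- c * (b - a)"] l by (simp add: algebra_simps)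
  also have "\<dots> \<le> l * (M * a) + (1 - l) * (M * b)"
    using l Ma Mb by (intro add_mono mult_left_mono) auto
  also have "\<dots> = M * u" by (simp add: u algebra_simps)
  finally show ?thesis using assms unfolding M_def by (simp add: pos_divide_le_eq)
qed

context
  fixes r t :: real
  assumes t_pos: "0 < t"
begin

lemma ramp_cases: "ramp r t s = (if s \<le> r then 1 else if s \<le> r + t then (r + t - s) / t else 0)"
  using t_pos by (simp add: ramp_def field_simps)

lemma ramp_below: "s \<le> r \<Longrightarrow> ramp r t s = 1"
  by (simp add: ramp_cases)

lemma ramp_between: "r \<le> s \<Longrightarrow> s \<le> r + t \<Longrightarrow> ramp r t s = (r + t - s) / t"
  using t_pos by (auto simp: ramp_cases)

lemma ramp_above: "r + t \<le> s \<Longrightarrow> ramp r t s = 0"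
  using t_pos by (simp add: ramp_cases)

lemma ramp_reflect: "ramp r t (2 * r + t - s) = 1 - ramp r t s"
  using t_pos by (simp add: ramp_cases field_simps)

lemma ramp_slope_reflect: "ramp_slope r t (2 * r + t - s) = ramp_slope r t s"
  using t_pos by (auto simp: ramp_slope_def)

lemma ramp_smooth_sens_reflect: "ramp_smooth_sens r t g (2 * r + t - v) = ramp_smooth_sens r t g v"
  using t_pos by (auto simp: ramp_smooth_sens_def algebra_simps)

lemma ramp_slope_pos: "0 < ramp_slope r t s"
  using t_pos by (simp add: ramp_slope_def)

lemma ramp_slope_le_one_div: "ramp_slope r t s \<le> 1 / t"
  using t_pos by (simp add: ramp_slope_def divide_simps)

lemma ramp_lipschitz_at: "\<bar>ramp r t s - ramp r t u\<bar> \<le> ramp_slope r t s * \<bar>s - u\<bar>"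
proof -
  have far: "\<bar>ramp r t s - ramp r t u\<bar> \<le> ramp_slope r t s * \<bar>s - u\<bar>" if s: "r + t \<le> s" for s u
  proof -
    have "ramp r t u \<le> (s - u) / (s - r)" if "u \<le> s"
    proof -
      consider "u \<le> r" | "r < u" "u \<le> r + t" | "r + t < u" by linarith
      then show ?thesis
      proof cases
        case 2
        have "(u - r) * t \<le> (u - r) * (s - r)" using 2 s by (intro mult_left_mono) auto
        then show ?thesis using 2 s t_pos by (simp add: ramp_cases divide_simps algebra_simps)
      qed (use s t_pos that in \<open>simp_all add: ramp_cases\<close>)
    qed
    moreover have "0 \<le> ramp r t u" by (simp add: ramp_def)
    moreover have "ramp r t s = 0" "ramp_slope r t s = 1 / (s - r)"
      using s t_pos by (auto simp: ramp_cases ramp_slope_def)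
    ultimately show ?thesis using s t_pos by (cases "u \<le> s") (auto simp: ramp_cases abs_if)
  qed
  consider "r + t \<le> s" | "s < r" | "r \<le> s" "s \<le> r + t" by linarith
  then show ?thesis
  proof cases
    case 1 then show ?thesis by (rule far)
  next
    case 2
    then have "r + t \<le> 2 * r + t - s" by simp
    from far[OF this, of "2 * r + t - u"] show ?thesis
      by (simp add: ramp_reflect ramp_slope_reflect abs_minus_commute)
  next
    case 3
    have clamp: "\<bar>max 0 (min 1 x) - max 0 (min 1 y)\<bar> \<le> \<bar>x - y\<bar>" for x y :: real
      by (simp add: max_def min_def abs_if)
    have "\<bar>ramp r t s - ramp r t u\<bar> \<le> \<bar>(r + t - s) / t - (r + t - u) / t\<bar>"
      unfolding ramp_def by (rule clamp)
    also have "\<dots> = \<bar>(u - s) / t\<bar>" by (simp add: diff_divide_distrib[symmetric])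
    also have "\<dots> = \<bar>s - u\<bar> / t" using t_pos by (simp add: abs_minus_commute)
    finally show ?thesis using 3 by (simp add: ramp_slope_def)
  qed
qed

lemma ramp_slope_attained: "\<exists>s\<in>{r, r + t}. s \<noteq> v \<and> \<bar>ramp r t v - ramp r t s\<bar> = ramp_slope r t v * \<bar>v - s\<bar>"
proof -
  have ends: "ramp r t r = 1" "ramp r t (r + t) = 0" using t_pos by (simp_all add: ramp_cases)
  have upper: "r \<noteq> v \<and> \<bar>ramp r t v - ramp r t r\<bar> = ramp_slope r t v * \<bar>v - r\<bar>" if "r + t / 2 \<le> v" for v
    using that t_pos by (auto simp: ramp_cases ramp_slope_def field_simps)
  show ?thesis
  proof (cases "r + t / 2 \<le> v")
    case True then show ?thesis using upper by blast
  next
    case False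
    then have "r + t / 2 \<le> 2 * r + t - v" by simp
    from upper[OF this] have "r + t \<noteq> v"
      and "\<bar>ramp r t r - ramp r t (2 * r + t - v)\<bar> = ramp_slope r t v * \<bar>2 * r + t - v - r\<bar>"
      by (auto simp: ramp_slope_reflect)
    moreover have "\<bar>ramp r t r - ramp r t (2 * r + t - v)\<bar> = \<bar>ramp r t v - ramp r t (r + t)\<bar>"
      by (simp add: ends ramp_reflect)
    moreover have "\<bar>2 * r + t - v - r\<bar> = \<bar>v - (r + t)\<bar>" by arith
    ultimately show ?thesis by auto
  qed
qed

lemma ramp_smooth_sens_below:
  "v < r \<Longrightarrow> ramp_smooth_sens r t g v = max (1 / (r + t - v)) (exp (- g * (r - v)) / t)"
  by (simp add: ramp_smooth_sens_def)

lemma ramp_smooth_sens_above: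
  "r + t \<le> v \<Longrightarrow> ramp_smooth_sens r t g v = max (1 / (v - r)) (exp (- g * (v - (r + t))) / t)"
  using t_pos by (auto simp: ramp_smooth_sens_def)

lemma ramp_smooth_sens_between: "r \<le> v \<Longrightarrow> v \<le> r + t \<Longrightarrow> ramp_smooth_sens r t g v = 1 / t"
  by (simp add: ramp_smooth_sens_def)

lemma ramp_smooth_sens_eq_max_slope:
  obtains c where "r \<le> c" "c \<le> r + t"
    "ramp_smooth_sens r t g v = max (ramp_slope r t v) (ramp_slope r t c * exp (- g * \<bar>v - c\<bar>))"
proof
  let ?c = "max r (min (r + t) v)"
  show "r \<le> ?c" "?c \<le> r + t" using t_pos by auto
  show "ramp_smooth_sens r t g v = max (ramp_slope r t v) (ramp_slope r t ?c * exp (- g * \<bar>v - ?c\<bar>))"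
  proof (cases "v < r")
    case True then show ?thesis using t_pos by (simp add: ramp_smooth_sens_def ramp_slope_def)
  next
    case False then show ?thesis
      using t_pos by (cases "v \<le> r + t") (simp_all add: ramp_smooth_sens_def ramp_slope_def max.commute)
  qed
qed

lemma ramp_slope_decay_le_smooth_sens:
  assumes g: "0 \<le> g"
  shows "ramp_slope r t s * exp (- g * \<bar>v - s\<bar>) \<le> ramp_smooth_sens r t g v"
proof -
  have decay: "exp (- g * y) \<le> exp (- g * x)" if "x \<le> y" for x y
    using that g by (simp add: mult_left_mono)
  have far: "ramp_slope r t s * exp (- g * \<bar>v - s\<bar>) \<le> ramp_smooth_sens r t g v"
    if v: "r + t \<le> v" for s v
  proof -
    consider "v \<le> s" | "r + t \<le> s" "s \<le> v" | "s \<le> r + t" by linarith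
    then have "ramp_slope r t s * exp (- g * \<bar>v - s\<bar>) \<le> max (1 / (v - r)) (exp (- g * (v - (r + t))) / t)"
    proof cases
      case 1
      have "ramp_slope r t s \<le> 1 / (v - r)"
        using 1 v t_pos by (simp add: ramp_slope_def divide_simps)
      moreover have "exp (- g * \<bar>v - s\<bar>) \<le> 1" using decay[of 0] by simp
      ultimately have "ramp_slope r t s * exp (- g * \<bar>v - s\<bar>) \<le> 1 / (v - r) * 1"
        using 1 v t_pos by (intro mult_mono) auto
      then show ?thesis by (simp add: le_max_iff_disj)
    next
      case 2
      have "exp (- g * ((v - r) - (s - r))) / (s - r) \<le> max (exp (- g * ((v - r) - t)) / t) (1 / (v - r))"
        using 2 t_pos by (intro exp_decay_div_le_max) auto
      then show ?thesis using 2 t_pos by (simp add: ramp_slope_def max.commute algebra_simps)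
    next
      case 3
      have "ramp_slope r t s * exp (- g * \<bar>v - s\<bar>) \<le> 1 / t * exp (- g * (v - (r + t)))"
        using 3 v t_pos ramp_slope_pos[of s] ramp_slope_le_one_div[of s] decay[of "v - (r + t)" "\<bar>v - s\<bar>"]
        by (intro mult_mono) auto
      then show ?thesis by (intro max.coboundedI2) simp
    qed
    then show ?thesis using ramp_smooth_sens_above[OF v] by simp
  qed
  consider "r + t \<le> v" | "v < r" | "r \<le> v" "v \<le> r + t" by linarith
  then show ?thesis
  proof cases
    case 1 then show ?thesis by (rule far)
  next
    case 2
    then have "r + t \<le> 2 * r + t - v" by simp
    from far[OF this, of "2 * r + t - s"] show ?thesis
      by (simp add: ramp_slope_reflect ramp_smooth_sens_reflect abs_minus_commute)
  next
    case 3
    have "exp (- g * \<bar>v - s\<bar>) \<le> 1" using decay[of 0 "\<bar>v - s\<bar>"] by simp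
    then have "ramp_slope r t s * exp (- g * \<bar>v - s\<bar>) \<le> 1 / t * 1"
      using t_pos ramp_slope_pos[of s] ramp_slope_le_one_div[of s] by (intro mult_mono) auto
    then show ?thesis using 3 by (simp add: ramp_smooth_sens_between)
  qed
qed

lemma ramp_smooth_sens_max_below:
  assumes g: "0 \<le> g" and "v1 < r" "v2 < r"
  shows "ramp_smooth_sens r t g (max v1 v2) = max (ramp_smooth_sens r t g v1) (ramp_smooth_sens r t g v2)"
proof -
  have mono: "ramp_smooth_sens r t g x \<le> ramp_smooth_sens r t g y" if "x \<le> y" "y < r" for x y
  proof -
    have "1 / (r + t - x) \<le> 1 / (r + t - y)" using that t_pos by (simp add: frac_le)
    moreover have "exp (- g * (r - x)) / t \<le> exp (- g * (r - y)) / t"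
      using that g t_pos by (simp add: divide_right_mono mult_left_mono)
    ultimately show ?thesis
      unfolding ramp_smooth_sens_below[OF le_less_trans[OF that]] ramp_smooth_sens_below[OF that(2)]
      by (rule max.mono)
  qed
  show ?thesis
  proof (cases "v1 \<le> v2")
    case True then show ?thesis using mono[of v1 v2] assms by (simp add: max_def)
  next
    case False then show ?thesis using mono[of v2 v1] assms by (simp add: max_def)
  qed
qed

end

section \<open>Ramps of a 1-Lipschitz function\<close>

locale ramp_composition =
  fixes D :: "'a::real_normed_vector set" and f \<sigma> :: "'a \<Rightarrow> real" and r t :: real
  assumes t_pos: "0 < t"
    and f_eq: "p \<in> D \<Longrightarrow> f p = ramp r t (\<sigma> p)"
    and \<sigma>_lipschitz: "1-lipschitz_on D \<sigma>"
    and level_reachable: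
      "p \<in> D \<Longrightarrow> r \<le> s \<Longrightarrow> s \<le> r + t \<Longrightarrow> \<exists>q\<in>D. \<sigma> q = s \<and> norm (p - q) = \<bar>\<sigma> p - s\<bar>"
begin

lemma \<sigma>_dist_le: "p \<in> D \<Longrightarrow> q \<in> D \<Longrightarrow> \<bar>\<sigma> p - \<sigma> q\<bar> \<le> norm (p - q)"
  using lipschitz_onD[OF \<sigma>_lipschitz] by (simp add: dist_real_def dist_norm)

lemma local_lip_eq:
  assumes w: "w \<in> D"
  shows "local_lip f D w = ereal (ramp_slope r t (\<sigma> w))"
proof (rule antisym)
  let ?K = "ramp_slope r t (\<sigma> w)"
  have "\<bar>f w - f w'\<bar> \<le> ?K * norm (w - w')" if "w' \<in> D" for w'
  proof -
    have "\<bar>f w - f w'\<bar> \<le> ?K * \<bar>\<sigma> w - \<sigma> w'\<bar>"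
      using f_eq[OF w] f_eq[OF that] ramp_lipschitz_at[OF t_pos] by simp
    also have "\<dots> \<le> ?K * norm (w - w')"
      using ramp_slope_pos[OF t_pos, THEN less_imp_le] \<sigma>_dist_le[OF w that] by (intro mult_left_mono)
    finally show ?thesis .
  qed
  then show "local_lip f D w \<le> ereal ?K"
    unfolding local_lip_def by (intro Inf_lower) blast
  show "ereal ?K \<le> local_lip f D w"
    unfolding local_lip_def
  proof (rule Inf_greatest, clarify)
    fix K assume K: "\<forall>w'\<in>D. \<bar>f w - f w'\<bar> \<le> K * norm (w - w')"
    obtain s where s: "s \<in> {r, r + t}" "s \<noteq> \<sigma> w"
      and slope: "\<bar>ramp r t (\<sigma> w) - ramp r t s\<bar> = ?K * \<bar>\<sigma> w - s\<bar>"
      using ramp_slope_attained[OF t_pos] by blast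
    obtain q where q: "q \<in> D" "\<sigma> q = s" "norm (w - q) = \<bar>\<sigma> w - s\<bar>"
      using level_reachable[OF w, of s] s(1) t_pos by auto
    have "?K * norm (w - q) = \<bar>f w - f q\<bar>"
      using slope q f_eq[OF w] f_eq[OF q(1)] by simp
    also have "\<dots> \<le> K * norm (w - q)" using K q(1) by blast
    finally show "ereal ?K \<le> ereal K" using q(3) s(2) by simp
  qed
qed

lemma smooth_sens_eq:
  assumes g: "0 \<le> \<gamma>" and z: "z \<in> D"
  shows "smooth_sens f D (g_E \<gamma>) z = ereal (ramp_smooth_sens r t \<gamma> (\<sigma> z))"
proof -
  define F where "F w = ramp_slope r t (\<sigma> w) * exp (- \<gamma> * norm (z - w))" for w
  have "smooth_sens f D (g_E \<gamma>) z = (SUP w\<in>D. ereal (F w))"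
    unfolding smooth_sens_def
    by (rule SUP_cong) (simp_all add: local_lip_eq g_E_def F_def exp_minus field_simps)
  also have "\<dots> = ereal (ramp_smooth_sens r t \<gamma> (\<sigma> z))"
  proof (rule antisym)
    show "(SUP w\<in>D. ereal (F w)) \<le> ereal (ramp_smooth_sens r t \<gamma> (\<sigma> z))"
    proof (rule SUP_least)
      fix w assume w: "w \<in> D"
      have "F w \<le> ramp_slope r t (\<sigma> w) * exp (- \<gamma> * \<bar>\<sigma> z - \<sigma> w\<bar>)"
        unfolding F_def using ramp_slope_pos[OF t_pos, THEN less_imp_le] g \<sigma>_dist_le[OF z w]
        by (intro mult_left_mono) (auto simp: mult_left_mono)
      also have "\<dots> \<le> ramp_smooth_sens r t \<gamma> (\<sigma> z)"
        by (rule ramp_slope_decay_le_smooth_sens[OF t_pos g])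
      finally show "ereal (F w) \<le> ereal (ramp_smooth_sens r t \<gamma> (\<sigma> z))" by simp
    qed
  next
    obtain c where c: "r \<le> c" "c \<le> r + t" and eq:
      "ramp_smooth_sens r t \<gamma> (\<sigma> z) = max (ramp_slope r t (\<sigma> z)) (ramp_slope r t c * exp (- \<gamma> * \<bar>\<sigma> z - c\<bar>))"
      using ramp_smooth_sens_eq_max_slope[OF t_pos] by blast
    obtain q where q: "q \<in> D" "\<sigma> q = c" "norm (z - q) = \<bar>\<sigma> z - c\<bar>"
      using level_reachable[OF z c] by blast
    have "ereal (F z) \<le> (SUP w\<in>D. ereal (F w))" "ereal (F q) \<le> (SUP w\<in>D. ereal (F w))"
      using z q(1) by (auto intro: SUP_upper)
    moreover have "F z = ramp_slope r t (\<sigma> z)" "F q = ramp_slope r t c * exp (- \<gamma> * \<bar>\<sigma> z - c\<bar>)"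
      using q by (simp_all add: F_def)
    ultimately show "ereal (ramp_smooth_sens r t \<gamma> (\<sigma> z)) \<le> (SUP w\<in>D. ereal (F w))"
      unfolding eq by (simp add: max_def)
  qed
  finally show ?thesis .
qed

end

section \<open>Signed distance to a quadrant\<close>

lemma lipschitz_on_glue_at_zero:
  fixes m n :: "'a::real_normed_vector \<Rightarrow> real"
  assumes m: "L-lipschitz_on UNIV m" and n: "L-lipschitz_on UNIV n"
    and agree: "\<And>u. m u = 0 \<Longrightarrow> n u = 0"
  shows "L-lipschitz_on UNIV (\<lambda>u. if m u \<le> 0 then m u else n u)"
proof -
  have mixed: "dist (m u) (n v) \<le> L * dist u v" if uv: "m u \<le> 0" "0 < m v" for u v
  proof -
    \<comment> \<open>On the segment from u to v, m vanishes at some point, where both pieces agree.\<close>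
    let ?w = "\<lambda>x::real. u + x *\<^sub>R (v - u)"
    have "continuous_on {0..1} (\<lambda>x. m (?w x))"
      by (rule continuous_on_compose2[OF lipschitz_on_continuous_on[OF m]]) (auto intro!: continuous_intros)
    then obtain x where x: "0 \<le> x" "x \<le> 1" "m (?w x) = 0"
      using IVT'[of "\<lambda>x. m (?w x)" 0 0 1] uv by auto
    have "u - ?w x = (- x) *\<^sub>R (v - u)" "?w x - v = (1 - x) *\<^sub>R (u - v)"
      by (simp_all add: algebra_simps)
    then have split: "dist u (?w x) = x * dist u v" "dist (?w x) v = (1 - x) * dist u v"
      using x by (simp_all add: dist_norm norm_minus_commute)
    have "dist (m u) (n v) \<le> dist (m u) (m (?w x)) + dist (n (?w x)) (n v)"
      using x(3) agree[OF x(3)] unfolding dist_real_def by arith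
    also have "\<dots> \<le> L * dist u (?w x) + L * dist (?w x) v"
      using lipschitz_onD[OF m] lipschitz_onD[OF n] by (intro add_mono) auto
    also have "\<dots> = L * dist u v"
      unfolding split by (simp add: algebra_simps)
    finally show ?thesis .
  qed
  show ?thesis
  proof (rule lipschitz_onI)
    show "0 \<le> L" using lipschitz_on_nonneg[OF m] .
    fix u v :: 'a
    have "dist (m u) (m v) \<le> L * dist u v" "dist (n u) (n v) \<le> L * dist u v"
      using lipschitz_onD[OF m] lipschitz_onD[OF n] by auto
    then show "dist (if m u \<le> 0 then m u else n u) (if m v \<le> 0 then m v else n v) \<le> L * dist u v"
      using mixed[of u v] mixed[of v u] by (cases "m u \<le> 0"; cases "m v \<le> 0") (simp_all add: dist_commute)
  qed
qed

definition quadrant_sdist :: "real \<times> real \<Rightarrow> real" where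
  "quadrant_sdist u = (if max (fst u) (snd u) \<le> 0 then max (fst u) (snd u)
                       else norm (max (fst u) 0, max (snd u) 0))"

lemma quadrant_sdist_lipschitz: "1-lipschitz_on UNIV quadrant_sdist"
proof -
  have comp: "\<bar>fst u - fst v\<bar> \<le> dist u v" "\<bar>snd u - snd v\<bar> \<le> dist u v" for u v :: "real \<times> real"
    using dist_fst_le[of u v] dist_snd_le[of u v] by (simp_all add: dist_real_def)
  have "1-lipschitz_on UNIV (\<lambda>u::real \<times> real. max (fst u) (snd u))"
  proof (rule lipschitz_onI)
    fix u v :: "real \<times> real"
    have "\<bar>max (fst u) (snd u) - max (fst v) (snd v)\<bar> \<le> max \<bar>fst u - fst v\<bar> \<bar>snd u - snd v\<bar>"
      by (simp add: max_def abs_if)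
    also have "\<dots> \<le> dist u v" using comp by (rule max.boundedI)
    finally show "dist (max (fst u) (snd u)) (max (fst v) (snd v)) \<le> 1 * dist u v"
      by (simp add: dist_real_def)
  qed simp
  moreover have "1-lipschitz_on UNIV (\<lambda>u::real \<times> real. norm (max (fst u) 0, max (snd u) 0))"
  proof (rule lipschitz_onI)
    fix u v :: "real \<times> real"
    let ?P = "\<lambda>u::real \<times> real. (max (fst u) 0, max (snd u) 0)"
    have clamp: "(max a 0 - max b 0)\<^sup>2 \<le> (a - b)\<^sup>2" for a b :: real
      unfolding abs_le_square_iff[symmetric] by (simp add: max_def abs_if)
    have "norm (?P u - ?P v) = sqrt ((max (fst u) 0 - max (fst v) 0)\<^sup>2 + (max (snd u) 0 - max (snd v) 0)\<^sup>2)"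
      by (simp add: norm_Pair)
    also have "\<dots> \<le> sqrt ((fst u - fst v)\<^sup>2 + (snd u - snd v)\<^sup>2)"
      using clamp by (intro real_sqrt_le_mono add_mono)
    also have "\<dots> = norm (u - v)" by (simp add: norm_prod_def)
    finally have "norm (?P u - ?P v) \<le> norm (u - v)" .
    then show "dist (norm (?P u)) (norm (?P v)) \<le> 1 * dist u v"
      using norm_triangle_ineq3[of "?P u" "?P v"] by (simp add: dist_real_def dist_norm)
  qed simp
  moreover have "norm (max (fst u) 0, max (snd u) 0) = 0" if "max (fst u) (snd u) = 0" for u :: "real \<times> real"
  proof -
    have "fst u \<le> 0" "snd u \<le> 0" using that max.bounded_iff[of "fst u" "snd u" 0] by simp_all
    then show ?thesis by (simp add: max_absorb2 norm_Pair)
  qed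
  ultimately show ?thesis
    unfolding quadrant_sdist_def by (rule lipschitz_on_glue_at_zero)
qed

lemma quadrant_sdist_nonpos: "fst u \<le> 0 \<Longrightarrow> snd u \<le> 0 \<Longrightarrow> quadrant_sdist u = max (fst u) (snd u)"
  by (simp add: quadrant_sdist_def)

lemma quadrant_sdist_fst: "snd u \<le> 0 \<Longrightarrow> snd u \<le> fst u \<Longrightarrow> quadrant_sdist u = fst u"
  by (auto simp: quadrant_sdist_def max_def norm_Pair)

lemma quadrant_sdist_snd: "fst u \<le> 0 \<Longrightarrow> fst u \<le> snd u \<Longrightarrow> quadrant_sdist u = snd u"
  by (auto simp: quadrant_sdist_def max_def norm_Pair)

lemma quadrant_sdist_nonneg: "0 \<le> fst u \<Longrightarrow> 0 \<le> snd u \<Longrightarrow> quadrant_sdist u = norm u"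
  by (cases u) (auto simp: quadrant_sdist_def max_def)

section \<open>The function f_tau\<close>

definition corner_sdist :: "real \<Rightarrow> real \<Rightarrow> real \<Rightarrow> real \<times> real \<Rightarrow> real" where
  "corner_sdist T1 T2 \<tau> p = quadrant_sdist (c0 T1 T2 \<tau> - p)"

lemma corner_sdist_lipschitz: "1-lipschitz_on D (corner_sdist T1 T2 \<tau>)"
proof (rule lipschitz_onI)
  fix p q :: "real \<times> real"
  have "dist (quadrant_sdist (c0 T1 T2 \<tau> - p)) (quadrant_sdist (c0 T1 T2 \<tau> - q))
      \<le> 1 * dist (c0 T1 T2 \<tau> - p) (c0 T1 T2 \<tau> - q)"
    using quadrant_sdist_lipschitz by (rule lipschitz_onD) auto
  then show "dist (corner_sdist T1 T2 \<tau> p) (corner_sdist T1 T2 \<tau> q) \<le> 1 * dist p q"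
    by (simp add: corner_sdist_def dist_norm norm_minus_commute)
qed simp

lemma corner_sdist_left:
  "fst p < T1 + \<tau>/2 + R1 \<tau> \<Longrightarrow> T2 + \<tau>/2 + R1 \<tau> \<le> snd p \<Longrightarrow>
    corner_sdist T1 T2 \<tau> p = T1 + \<tau>/2 + R1 \<tau> - fst p"
  unfolding corner_sdist_def by (subst quadrant_sdist_fst) (simp_all add: c0_def)

lemma corner_sdist_below:
  "snd p < T2 + \<tau>/2 + R1 \<tau> \<Longrightarrow> T1 + \<tau>/2 + R1 \<tau> \<le> fst p \<Longrightarrow>
    corner_sdist T1 T2 \<tau> p = T2 + \<tau>/2 + R1 \<tau> - snd p"
  unfolding corner_sdist_def by (subst quadrant_sdist_snd) (simp_all add: c0_def)

lemma corner_sdist_outer: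
  "fst p \<le> T1 + \<tau>/2 + R1 \<tau> \<Longrightarrow> snd p \<le> T2 + \<tau>/2 + R1 \<tau> \<Longrightarrow>
    corner_sdist T1 T2 \<tau> p = norm (p - c0 T1 T2 \<tau>)"
  unfolding corner_sdist_def by (subst quadrant_sdist_nonneg) (simp_all add: c0_def norm_minus_commute)

lemma corner_sdist_inner:
  "T1 + \<tau>/2 + R1 \<tau> \<le> fst p \<Longrightarrow> T2 + \<tau>/2 + R1 \<tau> \<le> snd p \<Longrightarrow>
    corner_sdist T1 T2 \<tau> p = max (T1 + \<tau>/2 + R1 \<tau> - fst p) (T2 + \<tau>/2 + R1 \<tau> - snd p)"
  unfolding corner_sdist_def by (subst quadrant_sdist_nonpos) (simp_all add: c0_def)

context
  fixes T1 T2 \<tau> :: real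
  assumes tau: "0 < \<tau>"
begin

lemma R1_pos: "0 < R1 \<tau>"
  using tau by (simp add: R1_def)

lemma f_tau_eq_ramp:
  assumes p: "p \<in> dom_f T1 T2 \<tau>"
  shows "f_tau T1 T2 \<tau> p = ramp (R1 \<tau>) \<tau> (corner_sdist T1 T2 \<tau> p)"
proof -
  let ?\<sigma> = "corner_sdist T1 T2 \<tau> p"
  let ?S1 = "S1a T1 T2 \<tau> \<union> S11 T1 T2 \<tau> \<union> S12 T1 T2 \<tau> \<union> S13 T1 T2 \<tau>"
  let ?S0 = "S0a T1 T2 \<tau> \<union> S01 T1 T2 \<tau> \<union> S02 T1 T2 \<tau>"
  note sdist = corner_sdist_left corner_sdist_below corner_sdist_outer corner_sdist_inner
  note ramp_below = ramp_below[OF tau] and ramp_between = ramp_between[OF tau] and ramp_above = ramp_above[OF tau]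
  from p consider "p \<in> ?S1" | "p \<notin> ?S1" "p \<in> ?S0" | "p \<notin> ?S1" "p \<notin> ?S0" "p \<in> Sta T1 T2 \<tau>"
    | "p \<notin> ?S1" "p \<notin> ?S0" "p \<notin> Sta T1 T2 \<tau>" "p \<in> St1 T1 T2 \<tau>"
    | "p \<notin> ?S1" "p \<notin> ?S0" "p \<notin> Sta T1 T2 \<tau>" "p \<notin> St1 T1 T2 \<tau>" "p \<in> St2 T1 T2 \<tau>"
    unfolding dom_f_def by blast
  then show ?thesis
  proof cases
    case 1
    then have "?\<sigma> \<le> R1 \<tau>" using R1_pos by (auto simp: S1a_def S11_def S12_def S13_def sdist)
    then show ?thesis using 1 by (simp add: f_tau_def ramp_below)
  next
    case 2
    then have "R1 \<tau> + \<tau> \<le> ?\<sigma>" using R1_pos tau by (auto simp: S0a_def S01_def S02_def R2_def sdist)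
    then show ?thesis using 2 by (simp add: f_tau_def ramp_above)
  next
    case 3
    then have "?\<sigma> = norm (p - c0 T1 T2 \<tau>)" "R1 \<tau> \<le> ?\<sigma>" "?\<sigma> \<le> R1 \<tau> + \<tau>"
      by (auto simp: Sta_def R2_def sdist)
    then show ?thesis using 3 by (simp add: f_tau_def ramp_between R2_def)
  next
    case 4
    then have "?\<sigma> = T1 + \<tau>/2 + R1 \<tau> - fst p" "R1 \<tau> \<le> ?\<sigma>" "?\<sigma> \<le> R1 \<tau> + \<tau>"
      using R1_pos by (auto simp: St1_def sdist)
    then show ?thesis using 4 by (simp add: f_tau_def ramp_between)
  next
    case 5
    then have "?\<sigma> = T2 + \<tau>/2 + R1 \<tau> - snd p" "R1 \<tau> \<le> ?\<sigma>" "?\<sigma> \<le> R1 \<tau> + \<tau>"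
      using R1_pos by (auto simp: St2_def sdist)
    then show ?thesis using 5 by (simp add: f_tau_def ramp_between)
  qed
qed

lemma c0_notin_dom_f: "c0 T1 T2 \<tau> \<notin> dom_f T1 T2 \<tau>"
  using R1_pos tau
  by (auto simp: dom_f_def S1a_def S11_def S12_def S13_def S0a_def S01_def S02_def
      Sta_def St1_def St2_def c0_def R2_def)

lemma point_on_ray_dist:
  fixes c p :: "'a::real_normed_vector" and s :: real
  assumes "p \<noteq> c"
  defines "q \<equiv> c + (s / norm (p - c)) *\<^sub>R (p - c)"
  shows "norm (q - c) = \<bar>s\<bar>" and "norm (p - q) = \<bar>norm (p - c) - s\<bar>"
proof -
  have n: "0 < norm (p - c)" using assms by simp
  show "norm (q - c) = \<bar>s\<bar>" using n by (simp add: q_def)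
  have "p - q = (1 - s / norm (p - c)) *\<^sub>R (p - c)"
    by (simp add: q_def algebra_simps)
  also have "norm \<dots> = \<bar>(1 - s / norm (p - c)) * norm (p - c)\<bar>"
    by (simp add: abs_mult)
  also have "(1 - s / norm (p - c)) * norm (p - c) = norm (p - c) - s"
    using n by (simp add: field_simps)
  finally show "norm (p - q) = \<bar>norm (p - c) - s\<bar>" .
qed

lemma corner_sdist_level_reachable:
  assumes p: "p \<noteq> c0 T1 T2 \<tau>" and s: "R1 \<tau> \<le> s" "s \<le> R1 \<tau> + \<tau>"
  shows "\<exists>q\<in>dom_f T1 T2 \<tau>. corner_sdist T1 T2 \<tau> q = s \<and> norm (p - q) = \<bar>corner_sdist T1 T2 \<tau> p - s\<bar>"
proof -
  let ?c = "c0 T1 T2 \<tau>"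
  define u where "u = ?c - p"
  have "0 < s" using s R1_pos by linarith
  have "u \<noteq> 0" using p by (simp add: u_def)
  then consider "snd u < 0" "snd u \<le> fst u" | "fst u < 0" "fst u \<le> snd u" | "0 \<le> fst u" "0 \<le> snd u"
    by (cases u) fastforce
  then show ?thesis
  proof cases
    case 1
    let ?q = "(fst ?c - s, snd p)"
    have "?q \<in> St1 T1 T2 \<tau>" using 1 s by (auto simp: St1_def u_def c0_def)
    moreover have "corner_sdist T1 T2 \<tau> ?q = s" using \<open>0 < s\<close> 1
      by (subst corner_sdist_left) (auto simp: u_def c0_def)
    moreover have "corner_sdist T1 T2 \<tau> p = fst u"
      using 1 by (simp add: corner_sdist_def quadrant_sdist_fst u_def)
    moreover have "norm (p - ?q) = \<bar>fst u - s\<bar>"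
      by (cases p) (simp add: u_def abs_minus_commute)
    ultimately show ?thesis by (intro bexI[of _ ?q]) (auto simp: dom_f_def)
  next
    case 2
    let ?q = "(fst p, snd ?c - s)"
    have "?q \<in> St2 T1 T2 \<tau>" using 2 s by (auto simp: St2_def u_def c0_def)
    moreover have "corner_sdist T1 T2 \<tau> ?q = s" using \<open>0 < s\<close> 2
      by (subst corner_sdist_below) (auto simp: u_def c0_def)
    moreover have "corner_sdist T1 T2 \<tau> p = snd u"
      using 2 by (simp add: corner_sdist_def quadrant_sdist_snd u_def)
    moreover have "norm (p - ?q) = \<bar>snd u - s\<bar>"
      by (cases p) (simp add: u_def abs_minus_commute)
    ultimately show ?thesis by (intro bexI[of _ ?q]) (auto simp: dom_f_def)
  next
    case 3
    define q where "q = ?c + (s / norm (p - ?c)) *\<^sub>R (p - ?c)"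
    have dist_q: "norm (q - ?c) = s" "norm (p - q) = \<bar>norm (p - ?c) - s\<bar>"
      using point_on_ray_dist[OF p, of s] \<open>0 < s\<close> by (simp_all add: q_def)
    have "?c - q = (s / norm (p - ?c)) *\<^sub>R u" by (simp add: q_def u_def algebra_simps)
    then have "0 \<le> fst (?c - q)" "0 \<le> snd (?c - q)"
      using 3 \<open>0 < s\<close> by (simp_all add: mult_nonneg_nonneg)
    then have "q \<in> Sta T1 T2 \<tau>" "corner_sdist T1 T2 \<tau> q = s"
      using s dist_q by (auto simp: Sta_def R2_def c0_def corner_sdist_def quadrant_sdist_nonneg norm_minus_commute)
    moreover have "corner_sdist T1 T2 \<tau> p = norm (p - ?c)"
      using 3 by (simp add: corner_sdist_def quadrant_sdist_nonneg u_def norm_minus_commute)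
    moreover note dist_q(2)
    ultimately show ?thesis by (intro bexI[of _ q]) (auto simp: dom_f_def)
  qed
qed

lemma smooth_sens_f_tau:
  assumes "0 \<le> \<gamma>" and "z \<in> dom_f T1 T2 \<tau>"
  shows "smooth_sens (f_tau T1 T2 \<tau>) (dom_f T1 T2 \<tau>) (g_E \<gamma>) z
    = ereal (ramp_smooth_sens (R1 \<tau>) \<tau> \<gamma> (corner_sdist T1 T2 \<tau> z))"
proof -
  interpret ramp_composition "dom_f T1 T2 \<tau>" "f_tau T1 T2 \<tau>" "corner_sdist T1 T2 \<tau>" "R1 \<tau>" \<tau>
  proof
    show "0 < \<tau>" by (rule tau)
    show "f_tau T1 T2 \<tau> p = ramp (R1 \<tau>) \<tau> (corner_sdist T1 T2 \<tau> p)" if "p \<in> dom_f T1 T2 \<tau>" for p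
      using that by (rule f_tau_eq_ramp)
    show "1-lipschitz_on (dom_f T1 T2 \<tau>) (corner_sdist T1 T2 \<tau>)"
      by (rule corner_sdist_lipschitz)
    show "\<exists>q\<in>dom_f T1 T2 \<tau>. corner_sdist T1 T2 \<tau> q = s \<and> norm (p - q) = \<bar>corner_sdist T1 T2 \<tau> p - s\<bar>"
      if "p \<in> dom_f T1 T2 \<tau>" "R1 \<tau> \<le> s" "s \<le> R1 \<tau> + \<tau>" for p s
      using that c0_notin_dom_f by (intro corner_sdist_level_reachable) auto
  qed
  show ?thesis using assms by (rule smooth_sens_eq)
qed

end

theorem mainTheorem10:
  fixes T1 T2 \<tau> \<gamma> :: real
  assumes "T1 > 0" and "T2 > 0" and "0 < \<tau>" and "\<tau> < 2 * min T1 T2" and "\<gamma> > 0"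
  defines "B \<equiv> smooth_sens (f_tau T1 T2 \<tau>) (dom_f T1 T2 \<tau>) (g_E \<gamma>)"
  shows
   "(\<forall>z \<in> S01 T1 T2 \<tau>. B z = ereal (max (1 / (T1 + \<tau>/2 - fst z))
        ((1/\<tau>) * exp (- \<gamma> * (T1 - \<tau>/2 - fst z))))) \<and>
    (\<forall>z \<in> S02 T1 T2 \<tau>. B z = ereal (max (1 / (T2 + \<tau>/2 - snd z))
        ((1/\<tau>) * exp (- \<gamma> * (T2 - \<tau>/2 - snd z))))) \<and>
    (\<forall>z \<in> S0a T1 T2 \<tau>. B z = ereal (max (1 / (norm (z - c0 T1 T2 \<tau>) - R1 \<tau>))
        ((1/\<tau>) * exp (- \<gamma> * (norm (z - c0 T1 T2 \<tau>) - R2 \<tau>))))) \<and>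
    (\<forall>z \<in> S11 T1 T2 \<tau>. B z = ereal (max (1 / (fst z - (T1 - \<tau>/2)))
        ((1/\<tau>) * exp (- \<gamma> * (fst z - (T1 + \<tau>/2)))))) \<and>
    (\<forall>z \<in> S12 T1 T2 \<tau>. B z = ereal (max (1 / (snd z - (T2 - \<tau>/2)))
        ((1/\<tau>) * exp (- \<gamma> * (snd z - (T2 + \<tau>/2)))))) \<and>
    (\<forall>z \<in> S13 T1 T2 \<tau>. B z = ereal (max (1 / (fst z - (T1 - \<tau>/2)))
        (max ((1/\<tau>) * exp (- \<gamma> * (fst z - (T1 + \<tau>/2))))
        (max (1 / (snd z - (T2 - \<tau>/2)))
             ((1/\<tau>) * exp (- \<gamma> * (snd z - (T2 + \<tau>/2)))))))) \<and>
    (\<forall>z \<in> S1a T1 T2 \<tau>. B z = ereal (max (1 / (R2 \<tau> - norm (z - c0 T1 T2 \<tau>)))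
        ((1/\<tau>) * exp (- \<gamma> * (R1 \<tau> - norm (z - c0 T1 T2 \<tau>)))))) \<and>
    (\<forall>z \<in> St1 T1 T2 \<tau> \<union> St2 T1 T2 \<tau> \<union> Sta T1 T2 \<tau>. B z = ereal (1/\<tau>))"
proof -
  note R1 = R1_pos[OF \<open>0 < \<tau>\<close>]
  have B: "B z = ereal (ramp_smooth_sens (R1 \<tau>) \<tau> \<gamma> (corner_sdist T1 T2 \<tau> z))"
    if "z \<in> dom_f T1 T2 \<tau>" for z
    unfolding B_def using smooth_sens_f_tau[OF \<open>0 < \<tau>\<close>] \<open>\<gamma> > 0\<close> that by simp
  note below = ramp_smooth_sens_below[OF \<open>0 < \<tau>\<close>]
    and above = ramp_smooth_sens_above[OF \<open>0 < \<tau>\<close>]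
    and between = ramp_smooth_sens_between[OF \<open>0 < \<tau>\<close>]
  show ?thesis
    apply (intro conjI ballI)
    subgoal for z using B[of z] R1 \<open>0 < \<tau>\<close>
      by (auto simp: dom_f_def S01_def corner_sdist_left above algebra_simps)
    subgoal for z using B[of z] R1 \<open>0 < \<tau>\<close>
      by (auto simp: dom_f_def S02_def corner_sdist_below above algebra_simps)
    subgoal for z using B[of z]
      by (auto simp: dom_f_def S0a_def corner_sdist_outer above R2_def algebra_simps)
    subgoal for z using B[of z] by (auto simp: dom_f_def S11_def corner_sdist_left below algebra_simps)
    subgoal for z using B[of z] by (auto simp: dom_f_def S12_def corner_sdist_below below algebra_simps)
    subgoal for z using B[of z] R1 \<open>\<gamma> > 0\<close>
      by (simp add: dom_f_def S13_def corner_sdist_inner ramp_smooth_sens_max_below[OF \<open>0 < \<tau>\<close>])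
        (simp add: below algebra_simps max.assoc)
    subgoal for z using B[of z]
      by (auto simp: dom_f_def S1a_def corner_sdist_outer below R2_def algebra_simps)
    subgoal for z using B[of z] R1
      by (auto simp: dom_f_def St1_def St2_def Sta_def R2_def
          corner_sdist_left corner_sdist_below corner_sdist_outer between)
    done
qed

end
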